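(* Suppose $\rho^w$ is one-step coherently decomposable and satisfies the bounded conditional market risk assumption. Then, for an American option (with or without the buyer's commitment to an exercise strategy), it is optimal for the writer to terminate the hedging strategy at the exact moment the option is exercised, i.e. there is a minimal-risk hedging policy with $\hat\xi^{i}_k=0$ for all $i\le k$, so that the position $\xi_k\mathbf{1}\{\tau>k\}+\sum_{i=0}^k\hat\xi^i_k\mathbf{1}\{\tau=i\}$ is zero whenever $\tau\le k$. The same applies to the buyer when $\rho^b$ is one-step coherently decomposable and satisfies the bounded conditional market risk assumption.
   Context: Discrete-time setting: filtered probability space $(\Omega,\mathcal{F},(\mathcal{F}_t),\mathbb{P})$, zero interest rate, risky asset with $S_k:=S_{t_k}$ at trading dates $t_0<\dots<t_{K-1}<t_K=T$, $\Delta S_{k+1}=S_{k+1}-S_k$, adapted auxiliary process $Y_k$; variables in $\mathcal{L}_p$ for some $p\in[1,\infty]$. Exercise times are stopping times $\tau:\Omega\to\{0,\dots,K\}$; payoff $F(S_\tau,Y_\tau)=\sum_k\mathbf{1}\{\tau=k\}F(S_k,Y_k)$. Self-financing strategies: $X^\tau_0=p_0$, $X^\tau_{k+1}=X^\tau_k+(\xi_k\mathbf{1}\{\tau>k\}+\sum_{i=0}^k\hat\xi^i_k\mathbf{1}\{\tau=i\})\Delta S_{k+1}$ with $\xi_k,\hat\xi^i_k$ $\mathcal{F}_{t_k}$-measurable ($\hat\xi^i_k$ is the position held at $k$ after exercise at $i$). The writer minimizes $\rho^w(F(S_\tau,Y_\tau)-X^\tau_K)$ over strategies (for a committed $\tau$,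 or against the worst $\tau$ without commitment); the buyer minimizes $\rho^b(-F(S_\tau,Y_\tau)-X^\tau_K)$ over strategies and $\tau$. A conditional risk mapping $\rho_k:\mathcal{L}_p(\Omega,\mathcal{F}_{t_{k+1}},\mathbb{P})\to\mathcal{L}_p(\Omega,\mathcal{F}_{t_k},\mathbb{P})$ is conditionally convex, monotone and translation invariant; $\rho$ is one-step coherently decomposable if $\rho=\rho_0\circ\cdots\circ\rho_{K-1}$ for such mappings which are moreover conditionally scale invariant ($\rho_k(\alpha X)=\alpha\rho_k(X)$ for $\alpha\ge0$). Bounded conditional market risk: with $\rho_{k,K}:=\rho_k\circ\cdots\circ\rho_{K-1}$, for each $k$, $0\ge\inf_{\xi_k,\dots,\xi_{K-1}}\rho_{k,K}(-\sum_{\ell=k}^{K-1}\xi_\ell\Delta S_{\ell+1})>-\infty$ a.s. (and $=0$ when conditionally scale invariant). *)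

theory Defs
  imports "HOL-Probability.Probability"
begin

text \<open>Random variables are real functions; equalities/inequalities between elements of L_p
  are understood almost surely.\<close>
definition Lp_mem :: "'a measure \<Rightarrow> 'a measure \<Rightarrow> ennreal \<Rightarrow> ('a \<Rightarrow> real) \<Rightarrow> bool" where
  "Lp_mem M G p f \<longleftrightarrow> f \<in> borel_measurable G \<and>
     (if p = \<top> then (\<exists>C. AE x in M. \<bar>f x\<bar> \<le> C)
      else integrable M (\<lambda>x. \<bar>f x\<bar> powr enn2real p))"

text \<open>Conditional risk mapping rho_k : L_p(F_{k+1}) -> L_p(F_k) (loss convention:
  larger values = more risk), conditionally convex, monotone, translation invariant.\<close>
definition cond_risk_mapping ::
  "'a measure \<Rightarrow> (nat \<Rightarrow> 'a measure) \<Rightarrow> ennreal \<Rightarrow> nat \<Rightarrow> (('a \<Rightarrow> real) \<Rightarrow> ('a \<Rightarrow> real)) \<Rightarrow> bool" where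
  "cond_risk_mapping M F p k \<rho> \<longleftrightarrow>
     (\<forall>X. Lp_mem M (F (Suc k)) p X \<longrightarrow> Lp_mem M (F k) p (\<rho> X)) \<and>
     (\<forall>X Y. Lp_mem M (F (Suc k)) p X \<longrightarrow> Lp_mem M (F (Suc k)) p Y \<longrightarrow>
        (AE \<omega> in M. X \<omega> = Y \<omega>) \<longrightarrow> (AE \<omega> in M. \<rho> X \<omega> = \<rho> Y \<omega>)) \<and>
     (\<forall>X Y. Lp_mem M (F (Suc k)) p X \<longrightarrow> Lp_mem M (F (Suc k)) p Y \<longrightarrow>
        (AE \<omega> in M. X \<omega> \<le> Y \<omega>) \<longrightarrow> (AE \<omega> in M. \<rho> X \<omega> \<le> \<rho> Y \<omega>)) \<and>
     (\<forall>X m. Lp_mem M (F (Suc k)) p X \<longrightarrow> Lp_mem M (F k) p m \<longrightarrow>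
        (AE \<omega> in M. \<rho> (\<lambda>x. X x + m x) \<omega> = \<rho> X \<omega> + m \<omega>)) \<and>
     (\<forall>X Y c. Lp_mem M (F (Suc k)) p X \<longrightarrow> Lp_mem M (F (Suc k)) p Y \<longrightarrow>
        c \<in> borel_measurable (F k) \<longrightarrow> (\<forall>\<omega>\<in>space M. 0 \<le> c \<omega> \<and> c \<omega> \<le> 1) \<longrightarrow>
        (AE \<omega> in M. \<rho> (\<lambda>x. c x * X x + (1 - c x) * Y x) \<omega>
                      \<le> c \<omega> * \<rho> X \<omega> + (1 - c \<omega>) * \<rho> Y \<omega>))"

definition coherent_cond_risk_mapping ::
  "'a measure \<Rightarrow> (nat \<Rightarrow> 'a measure) \<Rightarrow> ennreal \<Rightarrow> nat \<Rightarrow> (('a \<Rightarrow> real) \<Rightarrow> ('a \<Rightarrow> real)) \<Rightarrow> bool" where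
  "coherent_cond_risk_mapping M F p k \<rho> \<longleftrightarrow> cond_risk_mapping M F p k \<rho> \<and>
     (\<forall>X \<alpha>. Lp_mem M (F (Suc k)) p X \<longrightarrow> \<alpha> \<in> borel_measurable (F k) \<longrightarrow>
        (\<forall>\<omega>\<in>space M. 0 \<le> \<alpha> \<omega>) \<longrightarrow> Lp_mem M (F (Suc k)) p (\<lambda>x. \<alpha> x * X x) \<longrightarrow>
        (AE \<omega> in M. \<rho> (\<lambda>x. \<alpha> x * X x) \<omega> = \<alpha> \<omega> * \<rho> X \<omega>))"

definition rho_from :: "(nat \<Rightarrow> ('a \<Rightarrow> real) \<Rightarrow> ('a \<Rightarrow> real)) \<Rightarrow> nat \<Rightarrow> nat \<Rightarrow> ('a \<Rightarrow> real) \<Rightarrow> ('a \<Rightarrow> real)" where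
  "rho_from R k K = foldr (\<lambda>j g. R j \<circ> g) [k..<K] id"

definition one_step_coherent_decomposition ::
  "'a measure \<Rightarrow> (nat \<Rightarrow> 'a measure) \<Rightarrow> ennreal \<Rightarrow> nat \<Rightarrow> (('a \<Rightarrow> real) \<Rightarrow> ('a \<Rightarrow> real))
     \<Rightarrow> (nat \<Rightarrow> ('a \<Rightarrow> real) \<Rightarrow> ('a \<Rightarrow> real)) \<Rightarrow> bool" where
  "one_step_coherent_decomposition M F p K \<rho> R \<longleftrightarrow>
     (\<forall>k<K. coherent_cond_risk_mapping M F p k (R k)) \<and>
     (\<forall>X. Lp_mem M (F K) p X \<longrightarrow> \<rho> X = rho_from R 0 K X)"

definition is_ess_inf :: "'a measure \<Rightarrow> 'a measure \<Rightarrow> ('a \<Rightarrow> real) set \<Rightarrow> ('a \<Rightarrow> ereal) \<Rightarrow> bool" where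
  "is_ess_inf M G A Z \<longleftrightarrow> Z \<in> borel_measurable G \<and>
     (\<forall>f\<in>A. AE x in M. Z x \<le> ereal (f x)) \<and>
     (\<forall>g \<in> borel_measurable G. (\<forall>f\<in>A. AE x in M. g x \<le> ereal (f x)) \<longrightarrow> (AE x in M. g x \<le> Z x))"

definition admissible_pos ::
  "'a measure \<Rightarrow> (nat \<Rightarrow> 'a measure) \<Rightarrow> (nat \<Rightarrow> 'a \<Rightarrow> real) \<Rightarrow> ennreal \<Rightarrow> (nat \<Rightarrow> 'a \<Rightarrow> real) \<Rightarrow> bool" where
  "admissible_pos M F S p \<xi> \<longleftrightarrow>
     (\<forall>l. \<xi> l \<in> borel_measurable (F l) \<and>
          Lp_mem M (F (Suc l)) p (\<lambda>\<omega>. \<xi> l \<omega> * (S (Suc l) \<omega> - S l \<omega>)))"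

definition bounded_cond_market_risk ::
  "'a measure \<Rightarrow> (nat \<Rightarrow> 'a measure) \<Rightarrow> (nat \<Rightarrow> 'a \<Rightarrow> real) \<Rightarrow> nat \<Rightarrow> ennreal
     \<Rightarrow> (nat \<Rightarrow> ('a \<Rightarrow> real) \<Rightarrow> ('a \<Rightarrow> real)) \<Rightarrow> bool" where
  "bounded_cond_market_risk M F S K p R \<longleftrightarrow>
     (\<forall>k<K. \<exists>Z. is_ess_inf M (F k)
        {rho_from R k K (\<lambda>\<omega>. - (\<Sum>l\<in>{k..<K}. \<xi> l \<omega> * (S (Suc l) \<omega> - S l \<omega>))) | \<xi>.
           admissible_pos M F S p \<xi>} Z \<and>
        (AE \<omega> in M. Z \<omega> \<le> 0 \<and> - \<infinity> < Z \<omega>))"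

definition stopping_time_upto :: "'a measure \<Rightarrow> (nat \<Rightarrow> 'a measure) \<Rightarrow> nat \<Rightarrow> ('a \<Rightarrow> nat) \<Rightarrow> bool" where
  "stopping_time_upto M F K \<tau> \<longleftrightarrow> (\<forall>\<omega>\<in>space M. \<tau> \<omega> \<le> K) \<and>
     (\<forall>k\<le>K. {\<omega>\<in>space M. \<tau> \<omega> = k} \<in> sets (F k))"

text \<open>Terminal wealth X^tau_K of the self-financing strategy (p0, xi, xih), where
  xih i k is the position held at k after exercise at i.\<close>
definition wealth :: "(nat \<Rightarrow> 'a \<Rightarrow> real) \<Rightarrow> nat \<Rightarrow> real \<Rightarrow> (nat \<Rightarrow> 'a \<Rightarrow> real)
     \<Rightarrow> (nat \<Rightarrow> nat \<Rightarrow> 'a \<Rightarrow> real) \<Rightarrow> ('a \<Rightarrow> nat) \<Rightarrow> 'a \<Rightarrow> real" where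
  "wealth S K p0 \<xi> \<xi>h \<tau> \<omega> = p0 + (\<Sum>k<K.
      (\<xi> k \<omega> * (if k < \<tau> \<omega> then 1 else 0) + (\<Sum>i\<le>k. \<xi>h i k \<omega> * (if \<tau> \<omega> = i then 1 else 0)))
      * (S (Suc k) \<omega> - S k \<omega>))"

end

theory Submission
  imports Defs
begin

(* Split the wealth of a strategy with post-exercise positions into the wealth of the same
   strategy stopped at exercise plus the gains of the post-exercise position
   eta_k = sum_(i<=k) xih^i_k 1{tau = i}, which vanishes on {tau > k}.  Backward induction along
   rho = rho_0 o ... o rho_(K-1) shows that these extra gains never lower the risk.  At step k,
   on {tau > k} both losses agree and rho_k is local on F_k-events (a consequence of conditional
   convexity, weighting by an indicator); on {tau <= k} the loss is already F_k-measurable, so by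
   translation invariance the extra trade adds rho_k(- eta_k Delta S_(k+1)) >= 0.  This last
   inequality is where bounded conditional market risk enters: by scale invariance, a trade of
   negative risk on an F_k-event A could be multiplied by n on A, pushing the essential infimum
   below every bound.  The buyer's case is the writer's case with payoff -F. *)

lemma Lp_mem_cong:
  assumes "subalgebra M G" "Lp_mem M G p f" "\<And>x. x \<in> space M \<Longrightarrow> f x = g x"
  shows "Lp_mem M G p g"
proof -
  have "space G = space M" using assms(1) by (simp add: subalgebra_def)
  then have meas: "g \<in> borel_measurable G"
    using assms(2,3) measurable_cong[of G f g] by (auto simp: Lp_mem_def)
  have "AE x in M. \<bar>f x\<bar> = \<bar>g x\<bar>" using assms(3) by auto
  then have "(AE x in M. \<bar>f x\<bar> \<le> C) \<longleftrightarrow> (AE x in M. \<bar>g x\<bar> \<le> C)" for C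
    by auto
  moreover have "integrable M (\<lambda>x. \<bar>f x\<bar> powr q) \<longleftrightarrow> integrable M (\<lambda>x. \<bar>g x\<bar> powr q)" for q
    using assms(3) by (intro Bochner_Integration.integrable_cong) auto
  ultimately show ?thesis using assms(2) meas by (cases "p = \<top>") (auto simp: Lp_mem_def)
qed

lemma Lp_mem_subalgebra_mono:
  assumes "subalgebra M G" "subalgebra M G'" "sets G \<subseteq> sets G'" "Lp_mem M G p f"
  shows "Lp_mem M G' p f"
proof -
  have "subalgebra G' G" using assms(1-3) by (auto simp: subalgebra_def)
  then show ?thesis using assms(4) measurable_from_subalg by (auto simp: Lp_mem_def)
qed

lemma Lp_mem_const:
  assumes "finite_measure M" "subalgebra M G"
  shows "Lp_mem M G p (\<lambda>x. c)"
proof -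
  interpret finite_measure M by fact
  show ?thesis by (auto simp: Lp_mem_def)
qed

lemma abs_add_powr_le:
  fixes a b q :: real
  assumes "0 \<le> q"
  shows "\<bar>a + b\<bar> powr q \<le> 2 powr q * (\<bar>a\<bar> powr q + \<bar>b\<bar> powr q)"
proof -
  have "\<bar>a + b\<bar> powr q \<le> (2 * max \<bar>a\<bar> \<bar>b\<bar>) powr q"
    by (rule powr_mono2) (use assms in auto)
  also have "\<dots> = 2 powr q * max \<bar>a\<bar> \<bar>b\<bar> powr q" by (simp add: powr_mult)
  also have "\<dots> \<le> 2 powr q * (\<bar>a\<bar> powr q + \<bar>b\<bar> powr q)"
    by (intro mult_left_mono) (auto simp: max_def)
  finally show ?thesis .
qed

lemma Lp_mem_add:
  assumes G: "subalgebra M G" and f: "Lp_mem M G p f" and g: "Lp_mem M G p g"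
  shows "Lp_mem M G p (\<lambda>x. f x + g x)"
proof -
  have meas: "f \<in> borel_measurable G" "g \<in> borel_measurable G"
    using f g by (auto simp: Lp_mem_def)
  then have measM: "f \<in> borel_measurable M" "g \<in> borel_measurable M"
    using measurable_from_subalg[OF G] by auto
  show ?thesis
  proof (cases "p = \<top>")
    case True
    then obtain C D where "AE x in M. \<bar>f x\<bar> \<le> C" "AE x in M. \<bar>g x\<bar> \<le> D"
      using f g by (auto simp: Lp_mem_def)
    then have "AE x in M. \<bar>f x + g x\<bar> \<le> C + D" by eventually_elim auto
    then show ?thesis using True meas by (auto simp: Lp_mem_def)
  next
    case False
    define q where "q = enn2real p"
    have "integrable M (\<lambda>x. 2 powr q * (\<bar>f x\<bar> powr q + \<bar>g x\<bar> powr q))"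
      using f g False by (auto simp: Lp_mem_def q_def)
    moreover have "(\<lambda>x. \<bar>f x + g x\<bar> powr q) \<in> borel_measurable M" using measM by measurable
    ultimately have "integrable M (\<lambda>x. \<bar>f x + g x\<bar> powr q)"
      by (rule Bochner_Integration.integrable_bound)
        (rule AE_I2, auto intro: abs_add_powr_le simp: q_def)
    then show ?thesis using False meas by (auto simp: Lp_mem_def q_def)
  qed
qed

lemma Lp_mem_bounded_mult:
  assumes G: "subalgebra M G" and f: "Lp_mem M G p f" and c: "c \<in> borel_measurable G"
    and bound: "\<And>x. x \<in> space M \<Longrightarrow> \<bar>c x\<bar> \<le> B"
  shows "Lp_mem M G p (\<lambda>x. c x * f x)"
proof -
  have meas: "(\<lambda>x. c x * f x) \<in> borel_measurable G" using f c by (auto simp: Lp_mem_def)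
  have measM: "f \<in> borel_measurable M" "c \<in> borel_measurable M"
    using measurable_from_subalg[OF G] f c by (auto simp: Lp_mem_def)
  show ?thesis
  proof (cases "p = \<top>")
    case True
    then obtain C where "AE x in M. \<bar>f x\<bar> \<le> C" using f by (auto simp: Lp_mem_def)
    then have "AE x in M. \<bar>c x * f x\<bar> \<le> \<bar>B\<bar> * \<bar>C\<bar>"
      by (rule AE_mp) (rule AE_I2, auto simp: abs_mult dest!: bound intro: mult_mono')
    then show ?thesis using True meas by (auto simp: Lp_mem_def)
  next
    case False
    define q where "q = enn2real p"
    have "integrable M (\<lambda>x. \<bar>B\<bar> powr q * \<bar>f x\<bar> powr q)"
      using f False by (auto simp: Lp_mem_def q_def)
    moreover have "(\<lambda>x. \<bar>c x * f x\<bar> powr q) \<in> borel_measurable M" using measM by measurable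
    moreover have "AE x in M. norm (\<bar>c x * f x\<bar> powr q) \<le> norm (\<bar>B\<bar> powr q * \<bar>f x\<bar> powr q)"
    proof (rule AE_I2)
      fix x assume "x \<in> space M"
      have "\<bar>c x * f x\<bar> powr q = \<bar>c x\<bar> powr q * \<bar>f x\<bar> powr q" by (simp add: abs_mult powr_mult)
      also have "\<dots> \<le> \<bar>B\<bar> powr q * \<bar>f x\<bar> powr q"
        using bound[OF \<open>x \<in> space M\<close>] by (intro mult_right_mono powr_mono2) (auto simp: q_def)
      finally show "norm (\<bar>c x * f x\<bar> powr q) \<le> norm (\<bar>B\<bar> powr q * \<bar>f x\<bar> powr q)" by simp
    qed
    ultimately have "integrable M (\<lambda>x. \<bar>c x * f x\<bar> powr q)"
      by (rule Bochner_Integration.integrable_bound)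
    then show ?thesis using False meas by (auto simp: Lp_mem_def q_def)
  qed
qed

lemma Lp_mem_uminus:
  assumes "subalgebra M G" "Lp_mem M G p f"
  shows "Lp_mem M G p (\<lambda>x. - f x)"
  using Lp_mem_bounded_mult[OF assms, of "\<lambda>x. -1" 1] by simp

lemma Lp_mem_diff:
  assumes "subalgebra M G" "Lp_mem M G p f" "Lp_mem M G p g"
  shows "Lp_mem M G p (\<lambda>x. f x - g x)"
  using Lp_mem_add[OF assms(1,2) Lp_mem_uminus[OF assms(1,3)]] by simp

lemma Lp_mem_sum:
  assumes "finite_measure M" "subalgebra M G" "\<And>i. i \<in> I \<Longrightarrow> Lp_mem M G p (f i)"
  shows "Lp_mem M G p (\<lambda>x. \<Sum>i\<in>I. f i x)"
  using assms(3)
proof (induction I rule: infinite_finite_induct)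
  case (insert i I)
  then show ?case using Lp_mem_add[OF assms(2), of p "f i"] by simp
qed (simp_all add: Lp_mem_const[OF assms(1,2)])

lemma rho_from_Suc: "k < K \<Longrightarrow> rho_from R k K X = R k (rho_from R (Suc k) K X)"
  by (simp add: rho_from_def upt_conv_Cons)

lemma rho_from_ge: "K \<le> k \<Longrightarrow> rho_from R k K X = X"
  by (simp add: rho_from_def)

lemma wealth_split_at_exercise:
  "wealth S K p0 \<xi> \<xi>h \<tau> x = wealth S K p0 \<xi> (\<lambda>i k x. 0) \<tau> x
     + (\<Sum>k<K. (\<Sum>i\<le>k. \<xi>h i k x * (if \<tau> x = i then 1 else 0)) * (S (Suc k) x - S k x))"
  by (simp add: wealth_def distrib_right sum.distrib)

lemma ereal_le_multiples_imp_nonneg: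
  assumes "- \<infinity> < z" and le: "\<And>n::nat. z \<le> ereal (real n * w)"
  shows "0 \<le> w"
proof (rule ccontr)
  assume "\<not> 0 \<le> w"
  obtain r where r: "z = ereal r" using assms(1) le[of 0] by (cases z) auto
  obtain n :: nat where "r / w < real n" using reals_Archimedean2 by blast
  then have "real n * w < r" using \<open>\<not> 0 \<le> w\<close> by (simp add: divide_less_eq mult.commute)
  with le[of n] r show False by simp
qed

locale coherent_one_step_risk =
  fixes M :: "'a measure" and F :: "nat \<Rightarrow> 'a measure" and p :: ennreal and K :: nat
    and R :: "nat \<Rightarrow> ('a \<Rightarrow> real) \<Rightarrow> ('a \<Rightarrow> real)"
  assumes finite_M: "finite_measure M"
    and subalgebra_F: "\<And>k. subalgebra M (F k)"
    and sets_F_Suc: "\<And>k. sets (F k) \<subseteq> sets (F (Suc k))"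
    and coherent_R: "\<And>k. k < K \<Longrightarrow> coherent_cond_risk_mapping M F p k (R k)"
begin

abbreviation Lp :: "nat \<Rightarrow> ('a \<Rightarrow> real) \<Rightarrow> bool" where
  "Lp k f \<equiv> Lp_mem M (F k) p f"

lemma space_F [simp]: "space (F k) = space M"
  using subalgebra_F by (simp add: subalgebra_def)

lemma sets_F_mono: "i \<le> k \<Longrightarrow> sets (F i) \<subseteq> sets (F k)"
  using lift_Suc_mono_le[of "\<lambda>k. sets (F k)", OF sets_F_Suc] by blast

lemma measurable_F_mono: "i \<le> k \<Longrightarrow> f \<in> borel_measurable (F i) \<Longrightarrow> f \<in> borel_measurable (F k)"
  using measurable_from_subalg[of "F k" "F i"] sets_F_mono[of i k] by (auto simp: subalgebra_def)

lemma Lp_mono: "i \<le> k \<Longrightarrow> Lp i f \<Longrightarrow> Lp k f"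
  using Lp_mem_subalgebra_mono[OF subalgebra_F subalgebra_F sets_F_mono] by blast

lemma Lp_const: "Lp k (\<lambda>x. c)"
  using Lp_mem_const[OF finite_M subalgebra_F] .

lemma R_Lp: "k < K \<Longrightarrow> Lp (Suc k) X \<Longrightarrow> Lp k (R k X)"
  using coherent_R by (auto simp: coherent_cond_risk_mapping_def cond_risk_mapping_def)

lemma R_AE_cong:
  "k < K \<Longrightarrow> Lp (Suc k) X \<Longrightarrow> Lp (Suc k) Y \<Longrightarrow> AE \<omega> in M. X \<omega> = Y \<omega> \<Longrightarrow>
    AE \<omega> in M. R k X \<omega> = R k Y \<omega>"
  using coherent_R by (auto simp: coherent_cond_risk_mapping_def cond_risk_mapping_def)

lemma R_AE_mono:
  "k < K \<Longrightarrow> Lp (Suc k) X \<Longrightarrow> Lp (Suc k) Y \<Longrightarrow> AE \<omega> in M. X \<omega> \<le> Y \<omega> \<Longrightarrow>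
    AE \<omega> in M. R k X \<omega> \<le> R k Y \<omega>"
  using coherent_R by (auto simp: coherent_cond_risk_mapping_def cond_risk_mapping_def)

lemma R_add_known:
  "k < K \<Longrightarrow> Lp (Suc k) X \<Longrightarrow> Lp k C \<Longrightarrow> AE \<omega> in M. R k (\<lambda>x. X x + C x) \<omega> = R k X \<omega> + C \<omega>"
  using coherent_R by (auto simp: coherent_cond_risk_mapping_def cond_risk_mapping_def)

lemma R_convex:
  "k < K \<Longrightarrow> Lp (Suc k) X \<Longrightarrow> Lp (Suc k) Y \<Longrightarrow> c \<in> borel_measurable (F k) \<Longrightarrow>
    (\<forall>\<omega>\<in>space M. 0 \<le> c \<omega> \<and> c \<omega> \<le> 1) \<Longrightarrow>
    AE \<omega> in M. R k (\<lambda>x. c x * X x + (1 - c x) * Y x) \<omega> \<le> c \<omega> * R k X \<omega> + (1 - c \<omega>) * R k Y \<omega>"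
  using coherent_R by (auto simp: coherent_cond_risk_mapping_def cond_risk_mapping_def)

lemma R_scale:
  "k < K \<Longrightarrow> Lp (Suc k) X \<Longrightarrow> \<alpha> \<in> borel_measurable (F k) \<Longrightarrow> (\<forall>\<omega>\<in>space M. 0 \<le> \<alpha> \<omega>) \<Longrightarrow>
    Lp (Suc k) (\<lambda>x. \<alpha> x * X x) \<Longrightarrow> AE \<omega> in M. R k (\<lambda>x. \<alpha> x * X x) \<omega> = \<alpha> \<omega> * R k X \<omega>"
  using coherent_R by (auto simp: coherent_cond_risk_mapping_def)

lemma R_known:
  assumes "k < K" "Lp k C"
  shows "AE \<omega> in M. R k C \<omega> = C \<omega>"
proof -
  have "AE \<omega> in M. R k (\<lambda>x. 0 * 0) \<omega> = 0 * R k (\<lambda>x. 0) \<omega>"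
    using assms(1) by (intro R_scale Lp_const) auto
  moreover have "AE \<omega> in M. R k (\<lambda>x. 0 + C x) \<omega> = R k (\<lambda>x. 0) \<omega> + C \<omega>"
    using assms by (intro R_add_known Lp_const)
  ultimately show ?thesis by eventually_elim simp
qed

lemma R_local_le:
  assumes k: "k < K" and B: "B \<in> sets (F k)" and X: "Lp (Suc k) X" and X': "Lp (Suc k) X'"
    and eq: "AE \<omega> in M. \<omega> \<in> B \<longrightarrow> X \<omega> = X' \<omega>"
  shows "AE \<omega> in M. \<omega> \<in> B \<longrightarrow> R k X \<omega> \<le> R k X' \<omega>"
proof -
  define c :: "'a \<Rightarrow> real" where "c = indicator B"
  have c: "c \<in> borel_measurable (F k)" using B by (simp add: c_def)
  have c': "c \<in> borel_measurable (F (Suc k))" by (rule measurable_F_mono[OF _ c]) simp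
  have Z: "Lp (Suc k) (\<lambda>x. c x * X' x + (1 - c x) * X x)"
    by (intro Lp_mem_add[OF subalgebra_F] Lp_mem_bounded_mult[OF subalgebra_F, where B=1] X X' c'
        borel_measurable_diff borel_measurable_const)
      (auto simp: c_def indicator_def)
  have "AE \<omega> in M. c \<omega> * X' \<omega> + (1 - c \<omega>) * X \<omega> = X \<omega>"
    using eq by (rule AE_mp) (rule AE_I2, auto simp: c_def indicator_def)
  then have "AE \<omega> in M. R k (\<lambda>x. c x * X' x + (1 - c x) * X x) \<omega> = R k X \<omega>"
    by (intro R_AE_cong[OF k Z X])
  moreover have "AE \<omega> in M. R k (\<lambda>x. c x * X' x + (1 - c x) * X x) \<omega>
      \<le> c \<omega> * R k X' \<omega> + (1 - c \<omega>) * R k X \<omega>"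
    using c by (intro R_convex[OF k X' X]) (auto simp: c_def)
  ultimately show ?thesis by eventually_elim (auto simp: c_def)
qed

lemma R_local:
  assumes "k < K" "B \<in> sets (F k)" "Lp (Suc k) X" "Lp (Suc k) X'"
    and eq: "AE \<omega> in M. \<omega> \<in> B \<longrightarrow> X \<omega> = X' \<omega>"
  shows "AE \<omega> in M. \<omega> \<in> B \<longrightarrow> R k X \<omega> = R k X' \<omega>"
proof -
  have "AE \<omega> in M. \<omega> \<in> B \<longrightarrow> X' \<omega> = X \<omega>" using eq by (rule AE_mp) (rule AE_I2, auto)
  from R_local_le[OF assms] R_local_le[OF assms(1,2,4,3) this] show ?thesis
    by eventually_elim auto
qed

lemma rho_from_Lp:
  assumes "k \<le> K" "Lp K X"
  shows "Lp k (rho_from R k K X)"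
  using assms(1)
proof (induction k rule: inc_induct)
  case base
  then show ?case using assms(2) by (simp add: rho_from_ge)
next
  case (step n)
  then show ?case by (simp add: rho_from_Suc R_Lp)
qed

lemma rho_from_add_known:
  assumes "k \<le> K" "Lp K X" "Lp k C"
  shows "AE \<omega> in M. rho_from R k K (\<lambda>x. X x + C x) \<omega> = rho_from R k K X \<omega> + C \<omega>"
  using assms(1,3)
proof (induction k rule: inc_induct)
  case base
  then show ?case by (simp add: rho_from_ge)
next
  case (step n)
  have C: "Lp (Suc n) C" "Lp K C"
    using Lp_mono[OF _ step.prems, of "Suc n"] Lp_mono[OF _ step.prems, of K] step.hyps(2) by auto
  with step.IH have "AE \<omega> in M. R n (rho_from R (Suc n) K (\<lambda>x. X x + C x)) \<omega>
      = R n (\<lambda>x. rho_from R (Suc n) K X x + C x) \<omega>"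
    using step.hyps(2) assms(2)
    by (intro R_AE_cong rho_from_Lp Lp_mem_add[OF subalgebra_F]) auto
  moreover have "AE \<omega> in M. R n (\<lambda>x. rho_from R (Suc n) K X x + C x) \<omega>
      = R n (rho_from R (Suc n) K X) \<omega> + C \<omega>"
    using step.hyps(2) step.prems assms(2) by (intro R_add_known rho_from_Lp) auto
  ultimately show ?case by eventually_elim (simp add: rho_from_Suc step.hyps(2))
qed

lemma rho_from_known:
  assumes "k \<le> K" "Lp k C"
  shows "AE \<omega> in M. rho_from R k K C \<omega> = C \<omega>"
  using assms
proof (induction k rule: inc_induct)
  case base
  then show ?case by (simp add: rho_from_ge)
next
  case (step n)
  have C: "Lp (Suc n) C" "Lp K C"
    using Lp_mono[OF _ step.prems, of "Suc n"] Lp_mono[OF _ step.prems, of K] step.hyps(2) by auto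
  with step.IH have "AE \<omega> in M. R n (rho_from R (Suc n) K C) \<omega> = R n C \<omega>"
    using step.hyps(2) by (intro R_AE_cong rho_from_Lp) auto
  with R_known[OF step.hyps(2) step.prems] show ?case
    by eventually_elim (simp add: rho_from_Suc step.hyps(2))
qed

lemma rho_from_local:
  assumes "k \<le> K" "B \<in> sets (F k)" "Lp K X" "Lp K Y"
    and "AE \<omega> in M. \<omega> \<in> B \<longrightarrow> X \<omega> = Y \<omega>"
  shows "AE \<omega> in M. \<omega> \<in> B \<longrightarrow> rho_from R k K X \<omega> = rho_from R k K Y \<omega>"
  using assms(1,2)
proof (induction k rule: inc_induct)
  case base
  then show ?case using assms(5) by (simp add: rho_from_ge)
next
  case (step n)
  have "AE \<omega> in M. \<omega> \<in> B \<longrightarrow> rho_from R (Suc n) K X \<omega> = rho_from R (Suc n) K Y \<omega>"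
    using step.IH step.prems sets_F_Suc by blast
  then have "AE \<omega> in M. \<omega> \<in> B \<longrightarrow> R n (rho_from R (Suc n) K X) \<omega> = R n (rho_from R (Suc n) K Y) \<omega>"
    using step.hyps step.prems assms(3,4) by (intro R_local rho_from_Lp) auto
  then show ?case by (simp add: rho_from_Suc step.hyps(2))
qed

lemma ess_inf_le_R_single_trade:
  assumes k: "k < K"
    and Z: "is_ess_inf M (F k)
      {rho_from R k K (\<lambda>\<omega>. - (\<Sum>l\<in>{k..<K}. \<xi> l \<omega> * (S (Suc l) \<omega> - S l \<omega>))) | \<xi>.
        admissible_pos M F S p \<xi>} Z"
    and \<eta>: "\<eta> \<in> borel_measurable (F k)"
    and \<eta>S: "Lp (Suc k) (\<lambda>x. \<eta> x * (S (Suc k) x - S k x))"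
  shows "AE \<omega> in M. Z \<omega> \<le> ereal (R k (\<lambda>x. - (\<eta> x * (S (Suc k) x - S k x))) \<omega>)"
proof -
  define \<xi> where "\<xi> = (\<lambda>l x. if l = k then \<eta> x else 0)"
  define g where "g = (\<lambda>x. - (\<eta> x * (S (Suc k) x - S k x)))"
  have "admissible_pos M F S p \<xi>"
    unfolding admissible_pos_def
  proof
    fix l
    show "\<xi> l \<in> borel_measurable (F l) \<and> Lp (Suc l) (\<lambda>\<omega>. \<xi> l \<omega> * (S (Suc l) \<omega> - S l \<omega>))"
      by (cases "l = k") (simp_all add: \<xi>_def \<eta> \<eta>S Lp_const)
  qed
  moreover have "(\<Sum>l\<in>{k..<K}. \<xi> l \<omega> * (S (Suc l) \<omega> - S l \<omega>))
      = (\<Sum>l\<in>{k..<K}. if l = k then \<eta> \<omega> * (S (Suc k) \<omega> - S k \<omega>) else 0)" for \<omega>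
    by (rule sum.cong) (auto simp: \<xi>_def)
  then have "(\<lambda>\<omega>. - (\<Sum>l\<in>{k..<K}. \<xi> l \<omega> * (S (Suc l) \<omega> - S l \<omega>))) = g"
    using k by (simp add: g_def)
  ultimately have "AE \<omega> in M. Z \<omega> \<le> ereal (rho_from R k K g \<omega>)"
    using Z unfolding is_ess_inf_def by blast
  moreover have g: "Lp (Suc k) g" unfolding g_def by (rule Lp_mem_uminus[OF subalgebra_F \<eta>S])
  then have "AE \<omega> in M. R k (rho_from R (Suc k) K g) \<omega> = R k g \<omega>"
    using k by (intro R_AE_cong rho_from_Lp rho_from_known Lp_mono[OF _ g]) auto
  ultimately show ?thesis
    unfolding rho_from_Suc[OF k] by eventually_elim (simp add: g_def)
qed

lemma R_single_trade_nonneg: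
  assumes bmr: "bounded_cond_market_risk M F S K p R" and k: "k < K"
    and \<eta>: "\<eta> \<in> borel_measurable (F k)"
    and \<eta>S: "Lp (Suc k) (\<lambda>x. \<eta> x * (S (Suc k) x - S k x))"
  shows "AE \<omega> in M. 0 \<le> R k (\<lambda>x. - (\<eta> x * (S (Suc k) x - S k x))) \<omega>"
proof -
  obtain Z where Z: "is_ess_inf M (F k)
      {rho_from R k K (\<lambda>\<omega>. - (\<Sum>l\<in>{k..<K}. \<xi> l \<omega> * (S (Suc l) \<omega> - S l \<omega>))) | \<xi>.
        admissible_pos M F S p \<xi>} Z"
    and Z_finite: "AE \<omega> in M. Z \<omega> \<le> 0 \<and> - \<infinity> < Z \<omega>"
    using bmr k unfolding bounded_cond_market_risk_def by blast
  define W where "W = R k (\<lambda>x. - (\<eta> x * (S (Suc k) x - S k x)))"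
  define A where "A = {x \<in> space M. W x < 0}"
  have "W \<in> borel_measurable (F k)"
    using R_Lp[OF k Lp_mem_uminus[OF subalgebra_F \<eta>S]] by (simp add: W_def Lp_mem_def)
  then have "{x \<in> space (F k). W x < 0} \<in> sets (F k)" by measurable
  then have A: "A \<in> sets (F k)" by (simp add: A_def)
  have "AE \<omega> in M. Z \<omega> \<le> ereal (real n * indicator A \<omega> * W \<omega>)" for n :: nat
  proof -
    define \<alpha> :: "'a \<Rightarrow> real" where "\<alpha> = (\<lambda>x. real n * indicator A x)"
    have \<alpha>: "\<alpha> \<in> borel_measurable (F k)" using A by (simp add: \<alpha>_def)
    have \<alpha>S: "Lp (Suc k) (\<lambda>x. \<alpha> x * (\<eta> x * (S (Suc k) x - S k x)))"
      by (intro Lp_mem_bounded_mult[OF subalgebra_F \<eta>S, where B = "real n"] measurable_F_mono[OF _ \<alpha>])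
        (auto simp: \<alpha>_def indicator_def)
    have "AE \<omega> in M. Z \<omega> \<le> ereal (R k (\<lambda>x. - (\<alpha> x * \<eta> x * (S (Suc k) x - S k x))) \<omega>)"
      using \<alpha> \<eta> \<alpha>S by (intro ess_inf_le_R_single_trade[OF k Z]) (auto simp: mult_ac)
    moreover have "AE \<omega> in M. R k (\<lambda>x. \<alpha> x * - (\<eta> x * (S (Suc k) x - S k x))) \<omega> = \<alpha> \<omega> * W \<omega>"
      unfolding W_def using k \<alpha> Lp_mem_uminus[OF subalgebra_F \<alpha>S]
      by (intro R_scale Lp_mem_uminus[OF subalgebra_F \<eta>S]) (auto simp: \<alpha>_def)
    ultimately show ?thesis by eventually_elim (simp add: \<alpha>_def mult.assoc)
  qed
  then have "AE \<omega> in M. \<forall>n::nat. Z \<omega> \<le> ereal (real n * indicator A \<omega> * W \<omega>)"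
    by (simp add: AE_all_countable)
  with Z_finite AE_space have "AE \<omega> in M. 0 \<le> W \<omega>"
  proof eventually_elim
    case (elim \<omega>)
    show ?case
    proof (cases "\<omega> \<in> A")
      case True
      with elim show ?thesis by (intro ereal_le_multiples_imp_nonneg[of "Z \<omega>"]) auto
    qed (use elim in \<open>auto simp: A_def\<close>)
  qed
  then show ?thesis by (simp add: W_def)
qed

lemma R_le_R_minus_trade_on_known:
  assumes bmr: "bounded_cond_market_risk M F S K p R" and j: "j < K"
    and B: "B \<in> sets (F j)" and Y: "Lp (Suc j) Y" and C: "Lp j C"
    and YC: "AE \<omega> in M. \<omega> \<in> B \<longrightarrow> Y \<omega> = C \<omega>"
    and \<eta>: "\<eta> \<in> borel_measurable (F j)"
    and \<eta>S: "Lp (Suc j) (\<lambda>x. \<eta> x * (S (Suc j) x - S j x))"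
    and \<eta>_off: "\<And>x. x \<in> space M - B \<Longrightarrow> \<eta> x = 0"
  shows "AE \<omega> in M. R j Y \<omega> \<le> R j (\<lambda>x. Y x - \<eta> x * (S (Suc j) x - S j x)) \<omega>"
proof -
  define D where "D = (\<lambda>x. \<eta> x * (S (Suc j) x - S j x))"
  have mD: "Lp (Suc j) (\<lambda>x. - D x)" unfolding D_def by (rule Lp_mem_uminus[OF subalgebra_F \<eta>S])
  have YD: "Lp (Suc j) (\<lambda>x. Y x - D x)" unfolding D_def by (rule Lp_mem_diff[OF subalgebra_F Y \<eta>S])
  have C': "Lp (Suc j) C" by (rule Lp_mono[OF _ C]) simp
  have "space M - B \<in> sets (F j)" using B sets.compl_sets[of B "F j"] by simp
  then have off: "AE \<omega> in M. \<omega> \<in> space M - B \<longrightarrow> R j Y \<omega> = R j (\<lambda>x. Y x - D x) \<omega>"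
    by (rule R_local[OF j _ Y YD]) (simp add: D_def \<eta>_off)
  have "AE \<omega> in M. \<omega> \<in> B \<longrightarrow> R j Y \<omega> = R j C \<omega>" by (rule R_local[OF j B Y C' YC])
  with R_known[OF j C] have on_Y: "AE \<omega> in M. \<omega> \<in> B \<longrightarrow> R j Y \<omega> = C \<omega>"
    by eventually_elim simp
  have "AE \<omega> in M. \<omega> \<in> B \<longrightarrow> Y \<omega> - D \<omega> = - D \<omega> + C \<omega>"
    using YC by eventually_elim auto
  then have "AE \<omega> in M. \<omega> \<in> B \<longrightarrow> R j (\<lambda>x. Y x - D x) \<omega> = R j (\<lambda>x. - D x + C x) \<omega>"
    by (rule R_local[OF j B YD Lp_mem_add[OF subalgebra_F mD C']])
  with R_add_known[OF j mD C] have on_YD: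
    "AE \<omega> in M. \<omega> \<in> B \<longrightarrow> R j (\<lambda>x. Y x - D x) \<omega> = R j (\<lambda>x. - D x) \<omega> + C \<omega>"
    by eventually_elim simp
  have "AE \<omega> in M. 0 \<le> R j (\<lambda>x. - D x) \<omega>"
    unfolding D_def by (rule R_single_trade_nonneg[OF bmr j \<eta> \<eta>S])
  with off on_Y on_YD AE_space have "AE \<omega> in M. R j Y \<omega> \<le> R j (\<lambda>x. Y x - D x) \<omega>"
    by eventually_elim (cases "\<omega> \<in> B"; auto)
  then show ?thesis by (simp add: D_def)
qed

lemma rho_from_le_minus_trade_on_known:
  assumes bmr: "bounded_cond_market_risk M F S K p R" and j: "j < K"
    and B: "B \<in> sets (F j)" and X: "Lp K X" and C: "Lp j C" and XC: "\<forall>x\<in>B. X x = C x"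
    and \<eta>: "\<eta> \<in> borel_measurable (F j)"
    and \<eta>S: "Lp (Suc j) (\<lambda>x. \<eta> x * (S (Suc j) x - S j x))"
    and \<eta>_off: "\<And>x. x \<in> space M - B \<Longrightarrow> \<eta> x = 0"
  shows "AE \<omega> in M. rho_from R j K X \<omega> \<le> rho_from R j K (\<lambda>x. X x - \<eta> x * (S (Suc j) x - S j x)) \<omega>"
proof -
  define Y where "Y = rho_from R (Suc j) K X"
  define D where "D = (\<lambda>x. \<eta> x * (S (Suc j) x - S j x))"
  have D: "Lp (Suc j) D" unfolding D_def by (rule \<eta>S)
  have mD: "Lp (Suc j) (\<lambda>x. - D x)" by (rule Lp_mem_uminus[OF subalgebra_F D])
  have Y: "Lp (Suc j) Y" unfolding Y_def using j X by (intro rho_from_Lp) auto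
  have "B \<in> sets (F (Suc j))" using B sets_F_Suc by blast
  then have "AE \<omega> in M. \<omega> \<in> B \<longrightarrow> Y \<omega> = rho_from R (Suc j) K C \<omega>"
    unfolding Y_def using j XC by (intro rho_from_local X Lp_mono[OF _ C]) auto
  moreover have "AE \<omega> in M. rho_from R (Suc j) K C \<omega> = C \<omega>"
    using j by (intro rho_from_known Lp_mono[OF _ C]) auto
  ultimately have "AE \<omega> in M. \<omega> \<in> B \<longrightarrow> Y \<omega> = C \<omega>" by eventually_elim auto
  then have "AE \<omega> in M. R j Y \<omega> \<le> R j (\<lambda>x. Y x - D x) \<omega>"
    unfolding D_def by (rule R_le_R_minus_trade_on_known[OF bmr j B Y C _ \<eta> \<eta>S \<eta>_off])
  moreover have "AE \<omega> in M. rho_from R (Suc j) K (\<lambda>x. X x + - D x) \<omega> = Y \<omega> + - D \<omega>"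
    unfolding Y_def using j by (intro rho_from_add_known X mD) auto
  then have "AE \<omega> in M. rho_from R (Suc j) K (\<lambda>x. X x - D x) \<omega> = Y \<omega> - D \<omega>" by simp
  then have "AE \<omega> in M. R j (rho_from R (Suc j) K (\<lambda>x. X x - D x)) \<omega> = R j (\<lambda>x. Y x - D x) \<omega>"
    using j X D by (intro R_AE_cong Lp_mem_diff[OF subalgebra_F Y D] rho_from_Lp Lp_mem_diff[OF subalgebra_F]
        Lp_mono[OF _ D]) auto
  ultimately show ?thesis
    unfolding rho_from_Suc[OF j] Y_def[symmetric] by eventually_elim (simp add: D_def)
qed

lemma rho_from_le_minus_trades_on_known:
  assumes bmr: "bounded_cond_market_risk M F S K p R" and X: "Lp K X"
    and B: "\<And>j. j < K \<Longrightarrow> B j \<in> sets (F j)"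
    and known: "\<And>j. j < K \<Longrightarrow> \<exists>C. Lp j C \<and> (\<forall>x\<in>B j. X x = C x)"
    and \<eta>: "\<And>j. j < K \<Longrightarrow> \<eta> j \<in> borel_measurable (F j)"
    and \<eta>S: "\<And>j. j < K \<Longrightarrow> Lp (Suc j) (\<lambda>x. \<eta> j x * (S (Suc j) x - S j x))"
    and \<eta>_off: "\<And>j x. j < K \<Longrightarrow> x \<in> space M - B j \<Longrightarrow> \<eta> j x = 0"
  shows "AE \<omega> in M. rho_from R 0 K X \<omega>
    \<le> rho_from R 0 K (\<lambda>x. X x - (\<Sum>l<K. \<eta> l x * (S (Suc l) x - S l x))) \<omega>"
proof -
  define G where "G = (\<lambda>j x. X x - (\<Sum>l<j. \<eta> l x * (S (Suc l) x - S l x)))"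
  have gains: "Lp k (\<lambda>x. \<Sum>l<j. \<eta> l x * (S (Suc l) x - S l x))" if "j \<le> k" "j \<le> K" for j k
    using that by (intro Lp_mem_sum[OF finite_M subalgebra_F] Lp_mono[OF _ \<eta>S]) auto
  have G: "Lp K (G j)" if "j \<le> K" for j
    unfolding G_def using that by (intro Lp_mem_diff[OF subalgebra_F X] gains)
  have "AE \<omega> in M. rho_from R j K (G j) \<omega> \<le> rho_from R j K (G K) \<omega>" if "j \<le> K" for j
    using that
  proof (induction j rule: inc_induct)
    case base
    show ?case by simp
  next
    case (step n)
    have n: "n < K" "n \<le> K" using step.hyps by auto
    obtain C where C: "Lp n C" and XC: "\<forall>x\<in>B n. X x = C x" using known[OF n(1)] by blast
    have C': "Lp n (\<lambda>x. C x - (\<Sum>l<n. \<eta> l x * (S (Suc l) x - S l x)))"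
      using n by (intro Lp_mem_diff[OF subalgebra_F C] gains) auto
    have "\<forall>x\<in>B n. G n x = C x - (\<Sum>l<n. \<eta> l x * (S (Suc l) x - S l x))"
      using XC by (simp add: G_def)
    then have "AE \<omega> in M. rho_from R n K (G n) \<omega>
        \<le> rho_from R n K (\<lambda>x. G n x - \<eta> n x * (S (Suc n) x - S n x)) \<omega>"
      by (rule rho_from_le_minus_trade_on_known[OF bmr n(1) B[OF n(1)] G[OF n(2)] C'
          _ \<eta>[OF n(1)] \<eta>S[OF n(1)] \<eta>_off[OF n(1)]])
    moreover have "(\<lambda>x. G n x - \<eta> n x * (S (Suc n) x - S n x)) = G (Suc n)"
      by (simp add: G_def fun_eq_iff)
    ultimately have "AE \<omega> in M. rho_from R n K (G n) \<omega> \<le> rho_from R n K (G (Suc n)) \<omega>"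
      by simp
    moreover have "AE \<omega> in M. rho_from R n K (G (Suc n)) \<omega> \<le> rho_from R n K (G K) \<omega>"
      unfolding rho_from_Suc[OF step.hyps(2)] using step.hyps step.IH G
      by (intro R_AE_mono rho_from_Lp) auto
    ultimately show ?case by eventually_elim simp
  qed
  from this[of 0] show ?thesis by (simp add: G_def)
qed

context
  fixes \<tau> :: "'a \<Rightarrow> nat"
  assumes \<tau>: "stopping_time_upto M F K \<tau>"
begin

lemma stopping_time_upto_le_sets: "j \<le> K \<Longrightarrow> {x \<in> space M. \<tau> x \<le> j} \<in> sets (F j)"
proof -
  assume j: "j \<le> K"
  have "{x \<in> space M. \<tau> x \<le> j} = (\<Union>i\<le>j. {x \<in> space M. \<tau> x = i})" by auto
  also have "\<dots> \<in> sets (F j)"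
  proof (intro sets.finite_UN)
    fix i assume "i \<in> {..j}"
    then have "{x \<in> space M. \<tau> x = i} \<in> sets (F i)" "sets (F i) \<subseteq> sets (F j)"
      using \<tau> j sets_F_mono[of i j] by (auto simp: stopping_time_upto_def)
    then show "{x \<in> space M. \<tau> x = i} \<in> sets (F j)" by blast
  qed simp
  finally show ?thesis .
qed

lemma exercise_indicator_measurable:
  assumes "i \<le> k" "i \<le> K"
  shows "(\<lambda>x. if \<tau> x = i then 1 else 0 :: real) \<in> borel_measurable (F k)"
proof (rule measurable_If)
  show "{x \<in> space (F k). \<tau> x = i} \<in> sets (F k)"
    using \<tau> assms sets_F_mono[OF assms(1)] by (auto simp: stopping_time_upto_def)
qed simp_all

lemma continuation_indicator_measurable:
  assumes "l \<le> K"
  shows "(\<lambda>x. if l < \<tau> x then 1 else 0 :: real) \<in> borel_measurable (F l)"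
proof (rule measurable_If)
  have "{x \<in> space (F l). l < \<tau> x} = space (F l) - {x \<in> space M. \<tau> x \<le> l}" by auto
  then show "{x \<in> space (F l). l < \<tau> x} \<in> sets (F l)"
    using stopping_time_upto_le_sets[OF assms] sets.compl_sets[of _ "F l"] by simp
qed simp_all

lemma Lp_stopped_sum:
  assumes "j \<le> K" "j \<le> m" "\<And>i. i \<le> j \<Longrightarrow> Lp m (f i)"
  shows "Lp m (\<lambda>x. \<Sum>i\<le>j. f i x * (if \<tau> x = i then 1 else 0))"
proof -
  have "Lp m (\<lambda>x. (if \<tau> x = i then 1 else 0) * f i x)" if "i \<le> j" for i
    using that assms
    by (intro Lp_mem_bounded_mult[OF subalgebra_F, where B = 1] exercise_indicator_measurable) auto
  then have "Lp m (\<lambda>x. \<Sum>i\<le>j. (if \<tau> x = i then 1 else 0) * f i x)"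
    by (intro Lp_mem_sum[OF finite_M subalgebra_F]) simp
  then show ?thesis by (simp add: mult.commute)
qed

lemma stopped_hedge_loss_known_after_exercise:
  assumes h: "\<And>i. Lp i (h i)" and \<xi>: "admissible_pos M F S p \<xi>" and j: "j \<le> K"
  shows "\<exists>C. Lp j C \<and>
    (\<forall>x\<in>{x \<in> space M. \<tau> x \<le> j}. h (\<tau> x) x - wealth S K p0 \<xi> (\<lambda>i k x. 0) \<tau> x = C x)"
proof (intro exI conjI ballI)
  let ?gains = "\<lambda>x. \<Sum>l<j. (if l < \<tau> x then 1 else 0) * (\<xi> l x * (S (Suc l) x - S l x))"
  have "Lp (Suc l) (\<lambda>x. (if l < \<tau> x then 1 else 0) * (\<xi> l x * (S (Suc l) x - S l x)))" if "l < j" for l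
  proof (rule Lp_mem_bounded_mult[OF subalgebra_F _ measurable_F_mono[OF _ continuation_indicator_measurable]])
    show "Lp (Suc l) (\<lambda>x. \<xi> l x * (S (Suc l) x - S l x))" using \<xi> by (simp add: admissible_pos_def)
  qed (use that j in auto)
  then have "Lp j (\<lambda>x. (if l < \<tau> x then 1 else 0) * (\<xi> l x * (S (Suc l) x - S l x)))" if "l < j" for l
    using that by (intro Lp_mono[of "Suc l" j]) auto
  then have "Lp j ?gains" by (intro Lp_mem_sum[OF finite_M subalgebra_F]) simp
  then show "Lp j (\<lambda>x. (\<Sum>i\<le>j. h i x * (if \<tau> x = i then 1 else 0)) - (p0 + ?gains x))"
    using j by (intro Lp_mem_diff[OF subalgebra_F] Lp_mem_add[OF subalgebra_F] Lp_const Lp_stopped_sum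
        Lp_mono[OF _ h]) auto
  fix x assume "x \<in> {x \<in> space M. \<tau> x \<le> j}"
  then have "\<tau> x \<le> j" by simp
  have "(\<Sum>i\<le>j. h i x * (if \<tau> x = i then 1 else 0)) = (\<Sum>i\<le>j. if i = \<tau> x then h (\<tau> x) x else 0)"
    by (rule sum.cong) auto
  also have "\<dots> = h (\<tau> x) x" using \<open>\<tau> x \<le> j\<close> by simp
  moreover have "wealth S K p0 \<xi> (\<lambda>i k x. 0) \<tau> x
      = p0 + (\<Sum>k<K. (if k < \<tau> x then 1 else 0) * (\<xi> k x * (S (Suc k) x - S k x)))"
    by (simp add: wealth_def mult_ac)
  moreover have "(\<Sum>k<K. (if k < \<tau> x then 1 else 0) * (\<xi> k x * (S (Suc k) x - S k x))) = ?gains x"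
    using j \<open>\<tau> x \<le> j\<close> by (intro sum.mono_neutral_right) auto
  ultimately show "h (\<tau> x) x - wealth S K p0 \<xi> (\<lambda>i k x. 0) \<tau> x
      = (\<Sum>i\<le>j. h i x * (if \<tau> x = i then 1 else 0)) - (p0 + ?gains x)" by simp
qed

lemma post_exercise_position_measurable:
  assumes "\<And>i. admissible_pos M F S p (\<xi>h i)" "l \<le> K"
  shows "(\<lambda>x. \<Sum>i\<le>l. \<xi>h i l x * (if \<tau> x = i then 1 else 0)) \<in> borel_measurable (F l)"
  using assms unfolding admissible_pos_def
  by (intro borel_measurable_sum borel_measurable_times exercise_indicator_measurable) auto

lemma post_exercise_gain_Lp:
  assumes "\<And>i. admissible_pos M F S p (\<xi>h i)" "l \<le> K"
  shows "Lp (Suc l) (\<lambda>x. (\<Sum>i\<le>l. \<xi>h i l x * (if \<tau> x = i then 1 else 0)) * (S (Suc l) x - S l x))"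
proof -
  have "Lp (Suc l) (\<lambda>x. \<Sum>i\<le>l. \<xi>h i l x * (S (Suc l) x - S l x) * (if \<tau> x = i then 1 else 0))"
    using assms unfolding admissible_pos_def by (intro Lp_stopped_sum) auto
  moreover have "(\<lambda>x. \<Sum>i\<le>l. \<xi>h i l x * (S (Suc l) x - S l x) * (if \<tau> x = i then 1 else 0))
      = (\<lambda>x. (\<Sum>i\<le>l. \<xi>h i l x * (if \<tau> x = i then 1 else 0)) * (S (Suc l) x - S l x))"
    by (simp add: fun_eq_iff sum_distrib_left mult_ac)
  ultimately show ?thesis by (simp only:)
qed

lemma risk_hedge_stopped_at_exercise_le:
  assumes bmr: "bounded_cond_market_risk M F S K p R"
    and h: "\<And>i. Lp i (h i)" and \<xi>: "admissible_pos M F S p \<xi>"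
    and \<xi>h: "\<And>i. admissible_pos M F S p (\<xi>h i)"
    and \<rho>: "\<And>X. Lp K X \<Longrightarrow> \<rho> X = rho_from R 0 K X"
  shows "AE \<omega> in M. \<rho> (\<lambda>x. h (\<tau> x) x - wealth S K p0 \<xi> (\<lambda>i k x. 0) \<tau> x) \<omega>
    \<le> \<rho> (\<lambda>x. h (\<tau> x) x - wealth S K p0 \<xi> \<xi>h \<tau> x) \<omega>"
proof -
  define X where "X = (\<lambda>x. h (\<tau> x) x - wealth S K p0 \<xi> (\<lambda>i k x. 0) \<tau> x)"
  define \<eta> where "\<eta> = (\<lambda>l x. \<Sum>i\<le>l. \<xi>h i l x * (if \<tau> x = i then 1 else 0))"
  define X' where "X' = (\<lambda>x. X x - (\<Sum>l<K. \<eta> l x * (S (Suc l) x - S l x)))"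
  have known: "\<exists>C. Lp j C \<and> (\<forall>x\<in>{x \<in> space M. \<tau> x \<le> j}. X x = C x)" if "j \<le> K" for j
    unfolding X_def using stopped_hedge_loss_known_after_exercise[OF h \<xi> that] .
  then obtain C where C: "Lp K C" "\<forall>x\<in>{x \<in> space M. \<tau> x \<le> K}. X x = C x" by blast
  have "x \<in> space M \<Longrightarrow> C x = X x" for x using C(2) \<tau> by (simp add: stopping_time_upto_def)
  then have X: "Lp K X" by (rule Lp_mem_cong[OF subalgebra_F C(1)])
  have \<eta>: "\<eta> l \<in> borel_measurable (F l)" if "l < K" for l
    unfolding \<eta>_def using that by (intro post_exercise_position_measurable[OF \<xi>h]) simp
  have \<eta>S: "Lp (Suc l) (\<lambda>x. \<eta> l x * (S (Suc l) x - S l x))" if "l < K" for l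
    unfolding \<eta>_def using that by (intro post_exercise_gain_Lp[OF \<xi>h]) simp
  have \<eta>_off: "\<eta> l x = 0" if "x \<in> space M - {x \<in> space M. \<tau> x \<le> l}" for l x
    using that by (auto simp: \<eta>_def intro!: sum.neutral)
  have "AE \<omega> in M. rho_from R 0 K X \<omega> \<le> rho_from R 0 K X' \<omega>"
    unfolding X'_def
    by (rule rho_from_le_minus_trades_on_known[OF bmr X stopping_time_upto_le_sets known \<eta> \<eta>S \<eta>_off])
      simp_all
  moreover have "Lp K (\<lambda>x. \<Sum>l<K. \<eta> l x * (S (Suc l) x - S l x))"
    by (intro Lp_mem_sum[OF finite_M subalgebra_F] Lp_mono[OF _ \<eta>S]) auto
  then have X': "Lp K X'" unfolding X'_def by (rule Lp_mem_diff[OF subalgebra_F X])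
  moreover have "(\<lambda>x. h (\<tau> x) x - wealth S K p0 \<xi> \<xi>h \<tau> x) = X'"
    unfolding wealth_split_at_exercise[of S K p0 \<xi> \<xi>h] X'_def X_def \<eta>_def
    by (simp add: diff_diff_eq)
  ultimately show ?thesis unfolding X_def[symmetric] by (simp add: \<rho>[OF X] \<rho>[OF X'])
qed

end

end

theorem corollary1:
  fixes M :: "'a measure" and F :: "nat \<Rightarrow> 'a measure" and K :: nat and p :: ennreal
    and S :: "nat \<Rightarrow> 'a \<Rightarrow> real" and N :: "'y measure" and Y :: "nat \<Rightarrow> 'a \<Rightarrow> 'y"
    and Fpay :: "real \<Rightarrow> 'y \<Rightarrow> real"
    and \<rho> :: "('a \<Rightarrow> real) \<Rightarrow> ('a \<Rightarrow> real)" and R :: "nat \<Rightarrow> ('a \<Rightarrow> real) \<Rightarrow> ('a \<Rightarrow> real)"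
  assumes "prob_space M"
    and "1 \<le> p"
    and "\<forall>k. subalgebra M (F k)"
    and "\<forall>k. sets (F k) \<subseteq> sets (F (Suc k))"
    and "\<forall>k. Lp_mem M (F k) p (S k)"
    and "\<forall>k. Y k \<in> measurable (F k) N"
    and "\<forall>k. Lp_mem M (F k) p (\<lambda>\<omega>. Fpay (S k \<omega>) (Y k \<omega>))"
    and "one_step_coherent_decomposition M F p K \<rho> R"
    and "bounded_cond_market_risk M F S K p R"
  shows "\<forall>\<tau> \<xi> \<xi>h p0. stopping_time_upto M F K \<tau> \<and> admissible_pos M F S p \<xi> \<and>
            (\<forall>i. admissible_pos M F S p (\<xi>h i)) \<longrightarrow>
       (AE \<omega> in M. \<rho> (\<lambda>x. Fpay (S (\<tau> x) x) (Y (\<tau> x) x) - wealth S K p0 \<xi> (\<lambda>i k x. 0) \<tau> x) \<omega>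
                 \<le> \<rho> (\<lambda>x. Fpay (S (\<tau> x) x) (Y (\<tau> x) x) - wealth S K p0 \<xi> \<xi>h \<tau> x) \<omega>) \<and>
       (AE \<omega> in M. \<rho> (\<lambda>x. - Fpay (S (\<tau> x) x) (Y (\<tau> x) x) - wealth S K p0 \<xi> (\<lambda>i k x. 0) \<tau> x) \<omega>
                 \<le> \<rho> (\<lambda>x. - Fpay (S (\<tau> x) x) (Y (\<tau> x) x) - wealth S K p0 \<xi> \<xi>h \<tau> x) \<omega>)"
proof -
  interpret coherent_one_step_risk M F p K R
  proof (rule coherent_one_step_risk.intro)
    show "finite_measure M" using assms(1) by (rule prob_space.axioms(1))
    show "\<And>k. subalgebra M (F k)" "\<And>k. sets (F k) \<subseteq> sets (F (Suc k))" using assms(3,4) by blast+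
    show "\<And>k. k < K \<Longrightarrow> coherent_cond_risk_mapping M F p k (R k)"
      using assms(8) by (simp add: one_step_coherent_decomposition_def)
  qed
  have \<rho>: "\<And>X. Lp K X \<Longrightarrow> \<rho> X = rho_from R 0 K X"
    using assms(8) by (simp add: one_step_coherent_decomposition_def)
  have payoff: "Lp i (\<lambda>\<omega>. Fpay (S i \<omega>) (Y i \<omega>))" for i using assms(7) by blast
  show ?thesis
    by (intro allI impI conjI; elim conjE)
      (rule risk_hedge_stopped_at_exercise_le[OF _ assms(9) payoff _ _ \<rho>]
        risk_hedge_stopped_at_exercise_le[OF _ assms(9) Lp_mem_uminus[OF subalgebra_F payoff] _ _ \<rho>]; blast)+
qed

end
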